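(* With $i=\sqrt{-1}$, \begin{align*} \overline{S}(i,q)&=\sum_{n=1}^\infty q^{n^2}-\sum_{n=1}^\infty(-1)^nq^{2n^2},\\ \overline{S}_1(i,q)&=\sum_{n=1}^\infty q^{(2n-1)^2},\\ \overline{S}_2(i,q)&=\sum_{n=1}^\infty q^{(2n)^2}-\sum_{n=1}^\infty(-1)^nq^{2n^2}. \end{align*}
   Context: $(a;q)_\infty=\prod_{k\ge0}(1-aq^k)$. Define \begin{align*} \overline{S}(z,q)&=\sum_{n=1}^\infty\frac{q^n(-q^{n+1};q)_\infty(q^{n+1};q)_\infty}{(zq^n;q)_\infty(z^{-1}q^n;q)_\infty},\\ \overline{S}_1(z,q)&=\sum_{n=0}^\infty\frac{q^{2n+1}(-q^{2n+2};q)_\infty(q^{2n+2};q)_\infty}{(zq^{2n+1};q)_\infty(z^{-1}q^{2n+1};q)_\infty},\\ \overline{S}_2(z,q)&=\sum_{n=1}^\infty\frac{q^{2n}(-q^{2n+1};q)_\infty(q^{2n+1};q)_\infty}{(zq^{2n};q)_\infty(z^{-1}q^{2n};q)_\infty}. \end{align*} *)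

theory Defs
  imports "HOL-Analysis.Analysis"
begin

definition qpochinf :: "complex \<Rightarrow> complex \<Rightarrow> complex" where
  "qpochinf a q = (\<Prod>k. 1 - a * q ^ k)"

definition Sbar :: "complex \<Rightarrow> complex \<Rightarrow> complex" where
  "Sbar z q = (\<Sum>n. let m = Suc n in
      q ^ m * qpochinf (- (q ^ (m + 1))) q * qpochinf (q ^ (m + 1)) q
      / (qpochinf (z * q ^ m) q * qpochinf (inverse z * q ^ m) q))"

definition Sbar1 :: "complex \<Rightarrow> complex \<Rightarrow> complex" where
  "Sbar1 z q = (\<Sum>n. let m = 2 * n + 1 in
      q ^ m * qpochinf (- (q ^ (m + 1))) q * qpochinf (q ^ (m + 1)) q
      / (qpochinf (z * q ^ m) q * qpochinf (inverse z * q ^ m) q))"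

definition Sbar2 :: "complex \<Rightarrow> complex \<Rightarrow> complex" where
  "Sbar2 z q = (\<Sum>n. let m = 2 * Suc n in
      q ^ m * qpochinf (- (q ^ (m + 1))) q * qpochinf (q ^ (m + 1)) q
      / (qpochinf (z * q ^ m) q * qpochinf (inverse z * q ^ m) q))"

end

theory Submission
  imports Defs
begin

text \<open>
  Put p = q^2. Pairing factors by (a;q)_inf (-a;q)_inf = (a^2;q^2)_inf, the summand of index m at
  z = i becomes C (-1;p)_m / (p;p)_m q^m with C = (p;p)_inf / (-1;p)_inf. The q-binomial theorem sums
  these to C (-q;p)_inf / (q;p)_inf, and their alternating series to the same with q replaced by -q;
  S_1 and S_2 are the odd part and the even part without the term m = 0. The Jacobi triple product
  in the form 1 + 2 sum_{n>=1} q^(n^2) = (q^2;q^2)_inf (-q;q^2)_inf^2, together with Euler's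
  (-q;q)_inf (q;q^2)_inf = 1, turns every product into a theta series. The triple product itself is
  the limit of the finite q-binomial expansion of (-q;q^2)_n^2, justified by Tannery's theorem.
\<close>

section \<open>Finite and infinite q-Pochhammer symbols\<close>

definition qpoch :: "complex \<Rightarrow> complex \<Rightarrow> nat \<Rightarrow> complex" where
  "qpoch a t m = (\<Prod>k<m. 1 - a * t ^ k)"

lemma qpoch_0 [simp]: "qpoch a t 0 = 1"
  by (simp add: qpoch_def)

lemma qpoch_Suc: "qpoch a t (Suc m) = qpoch a t m * (1 - a * t ^ m)"
  by (simp add: qpoch_def)

lemma qpoch_Suc_shift: "qpoch a t (Suc m) = (1 - a) * qpoch (a * t) t m"
  unfolding qpoch_def by (subst prod.lessThan_Suc_shift) (simp add: mult_ac)

lemma qpoch_add: "qpoch a t (m + n) = qpoch a t m * qpoch (a * t ^ m) t n"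
  by (induction n) (simp_all add: qpoch_Suc power_add mult_ac)

lemma qpoch_double: "qpoch a t (2 * n) = qpoch a (t\<^sup>2) n * qpoch (a * t) (t\<^sup>2) n"
proof (induction n)
  case (Suc n)
  have "qpoch a t (2 * Suc n) = qpoch a t (2 * n) * (1 - a * t ^ (2 * n)) * (1 - a * t ^ Suc (2 * n))"
    by (simp add: qpoch_Suc)
  also have "\<dots> = qpoch a (t\<^sup>2) (Suc n) * qpoch (a * t) (t\<^sup>2) (Suc n)"
    by (simp add: Suc qpoch_Suc power_mult)
  finally show ?case .
qed simp

lemma norm_power2_less_one: "norm (q::complex) < 1 \<Longrightarrow> norm (q\<^sup>2) < 1"
  by (simp add: norm_power power_less_one_iff)

lemma convergent_prod_qpoch:
  fixes a t :: "'a::{real_normed_field,banach}"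
  assumes "norm t < 1"
  shows "convergent_prod (\<lambda>k. 1 - a * t ^ k)"
proof -
  have "summable (\<lambda>k. norm a * norm t ^ k)"
    using assms by (intro summable_mult summable_geometric) auto
  moreover have "(\<lambda>k. norm ((1 - a * t ^ k) - 1)) = (\<lambda>k. norm a * norm t ^ k)"
    by (simp add: norm_mult norm_power)
  ultimately have "summable (\<lambda>k. norm ((1 - a * t ^ k) - 1))" by simp
  hence "abs_convergent_prod (\<lambda>k. 1 - a * t ^ k)"
    by (rule summable_imp_abs_convergent_prod)
  thus ?thesis by (rule abs_convergent_prod_imp_convergent_prod)
qed

lemma has_prod_qpochinf:
  "norm t < 1 \<Longrightarrow> (\<lambda>k. 1 - a * t ^ k) has_prod qpochinf a t"
  unfolding qpochinf_def by (rule convergent_prod_has_prod[OF convergent_prod_qpoch])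

lemma qpoch_LIMSEQ:
  assumes "norm t < 1"
  shows "(\<lambda>m. qpoch a t m) \<longlonglongrightarrow> qpochinf a t"
proof -
  have "(\<lambda>n. \<Prod>i\<le>n. 1 - a * t ^ i) \<longlonglongrightarrow> qpochinf a t"
    unfolding qpochinf_def using convergent_prod_qpoch[OF assms] by (rule convergent_prod_LIMSEQ)
  thus ?thesis unfolding qpoch_def by (simp add: LIMSEQ_lessThan_iff_atMost)
qed

lemma qpochinf_nonzero:
  "norm t < 1 \<Longrightarrow> (\<And>k. 1 - a * t ^ k \<noteq> 0) \<Longrightarrow> qpochinf a t \<noteq> 0"
  unfolding qpochinf_def by (rule prodinf_nonzero[OF convergent_prod_qpoch])

lemma qpochinf_shift:
  assumes "norm t < 1"
  shows "qpochinf a t = qpoch a t m * qpochinf (a * t ^ m) t"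
proof -
  have "(\<lambda>k. 1 - a * t ^ k) has_prod (qpoch a t m * (\<Prod>k. 1 - a * t ^ (k + m)))"
    unfolding qpoch_def by (rule has_prod_ignore_initial_segment'[OF convergent_prod_qpoch[OF assms]])
  moreover have "(\<Prod>k. 1 - a * t ^ (k + m)) = qpochinf (a * t ^ m) t"
    unfolding qpochinf_def by (simp add: power_add mult_ac)
  ultimately show ?thesis using has_prod_qpochinf[OF assms, of a] has_prod_unique2 by metis
qed

lemma qpochinf_times_neg:
  assumes "norm t < 1"
  shows "qpochinf a t * qpochinf (-a) t = qpochinf (a\<^sup>2) (t\<^sup>2)"
proof -
  have "qpochinf a t * qpochinf (-a) t = (\<Prod>k. (1 - a * t ^ k) * (1 - (-a) * t ^ k))"
    unfolding qpochinf_def by (rule prodinf_mult[OF convergent_prod_qpoch[OF assms] convergent_prod_qpoch[OF assms]])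
  also have "\<dots> = qpochinf (a\<^sup>2) (t\<^sup>2)"
    unfolding qpochinf_def
    by (rule prodinf_cong) (simp add: algebra_simps power2_eq_square power_mult_distrib flip: power_mult)
  finally show ?thesis .
qed

lemma qpochinf_even_odd:
  assumes "norm t < 1"
  shows "qpochinf a t = qpochinf a (t\<^sup>2) * qpochinf (a * t) (t\<^sup>2)"
proof -
  have "(\<lambda>n. qpoch a t (2 * n)) \<longlonglongrightarrow> qpochinf a t"
    using LIMSEQ_subseq_LIMSEQ[OF qpoch_LIMSEQ[OF assms], of "\<lambda>n. 2 * n"]
    by (simp add: strict_mono_def o_def)
  moreover have "(\<lambda>n. qpoch a t (2 * n)) \<longlonglongrightarrow> qpochinf a (t\<^sup>2) * qpochinf (a * t) (t\<^sup>2)"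
    unfolding qpoch_double by (intro tendsto_mult qpoch_LIMSEQ norm_power2_less_one assms)
  ultimately show ?thesis by (rule LIMSEQ_unique)
qed

lemma one_minus_power_Suc_nonzero:
  fixes c t :: complex
  assumes "norm c \<le> 1" and "norm t < 1"
  shows "1 - c * t ^ Suc k \<noteq> 0"
proof
  assume "1 - c * t ^ Suc k = 0"
  hence "1 = norm (c * t ^ Suc k)" by simp
  also have "\<dots> \<le> norm t ^ Suc k"
    using assms(1) by (simp add: norm_mult norm_power mult_left_le_one_le)
  also have "\<dots> < 1" using assms(2) power_less_one_iff[of "norm t" "Suc k"] by simp
  finally show False by simp
qed

lemma qpoch_self_nonzero: "norm t < 1 \<Longrightarrow> qpoch t t m \<noteq> 0"
  using one_minus_power_Suc_nonzero[of 1 t] by (simp add: qpoch_def prod_zero_iff)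

lemma qpochinf_self_nonzero: "norm t < 1 \<Longrightarrow> qpochinf t t \<noteq> 0"
  using one_minus_power_Suc_nonzero[of 1 t] by (intro qpochinf_nonzero) auto

lemma one_plus_power_nonzero: "norm (t::complex) < 1 \<Longrightarrow> 1 - (-1) * t ^ k \<noteq> 0"
  using one_minus_power_Suc_nonzero[of "-1" t] by (cases k) auto

lemma qpoch_neg_one_nonzero: "norm t < 1 \<Longrightarrow> qpoch (-1) t m \<noteq> 0"
  unfolding qpoch_def using one_plus_power_nonzero by (subst prod_zero_iff) blast+

lemma qpochinf_neg_one_nonzero: "norm t < 1 \<Longrightarrow> qpochinf (-1) t \<noteq> 0"
  by (rule qpochinf_nonzero[OF _ one_plus_power_nonzero])


section \<open>Gaussian binomial coefficients\<close>

fun qbinom :: "complex \<Rightarrow> nat \<Rightarrow> nat \<Rightarrow> complex" where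
  "qbinom t 0 k = (if k = 0 then 1 else 0)"
| "qbinom t (Suc N) 0 = 1"
| "qbinom t (Suc N) (Suc k) = qbinom t N k + t ^ Suc k * qbinom t N (Suc k)"

lemma qbinom_eq_0: "N < k \<Longrightarrow> qbinom t N k = 0"
proof (induction N arbitrary: k)
  case (Suc N)
  then obtain k' where "k = Suc k'" by (cases k) auto
  thus ?case using Suc by simp
qed simp

lemma qbinom_0_right [simp]: "qbinom t N 0 = 1"
  by (cases N) auto

lemma qbinom_qpoch_step:
  assumes "Suc k \<le> N"
    and IH: "\<And>k. k \<le> N \<Longrightarrow> qbinom t N k * qpoch t t k * qpoch t t (N - k) = qpoch t t N"
  shows "t ^ Suc k * qbinom t N (Suc k) * qpoch t t (Suc k) * qpoch t t (N - k)
           = qpoch t t N * (t ^ Suc k - t * t ^ N)"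
proof -
  have e: "N - k = Suc (N - Suc k)" using assms by simp
  have "t ^ Suc k * qbinom t N (Suc k) * qpoch t t (Suc k) * qpoch t t (N - k)
      = t ^ Suc k * (qbinom t N (Suc k) * qpoch t t (Suc k) * qpoch t t (N - Suc k))
          * (1 - t * t ^ (N - Suc k))"
    unfolding e by (simp add: qpoch_Suc mult_ac)
  also have "\<dots> = qpoch t t N * (t ^ Suc k - t * (t ^ Suc k * t ^ (N - Suc k)))"
    using IH[OF assms(1)] by (simp add: algebra_simps)
  also have "t ^ Suc k * t ^ (N - Suc k) = t ^ N"
    by (metis assms(1) le_add_diff_inverse power_add)
  finally show ?thesis .
qed

lemma qbinom_qpoch: "k \<le> N \<Longrightarrow> qbinom t N k * qpoch t t k * qpoch t t (N - k) = qpoch t t N"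
proof (induction N arbitrary: k)
  case (Suc N)
  show ?case
  proof (cases k)
    case (Suc k')
    with Suc.prems have k': "k' \<le> N" by simp
    have low: "qbinom t N k' * qpoch t t (Suc k') * qpoch t t (N - k')
        = qpoch t t N * (1 - t * t ^ k')"
      using Suc.IH[OF k'] by (simp add: qpoch_Suc mult_ac)
    have high: "t ^ Suc k' * qbinom t N (Suc k') * qpoch t t (Suc k') * qpoch t t (N - k')
        = qpoch t t N * (t ^ Suc k' - t * t ^ N)"
    proof (cases "k' = N")
      case False
      with k' show ?thesis by (intro qbinom_qpoch_step Suc.IH) simp_all
    qed (simp add: qbinom_eq_0)
    have "qbinom t (Suc N) k * qpoch t t k * qpoch t t (Suc N - k)
        = qbinom t N k' * qpoch t t (Suc k') * qpoch t t (N - k')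
          + t ^ Suc k' * qbinom t N (Suc k') * qpoch t t (Suc k') * qpoch t t (N - k')"
      using Suc by (simp add: algebra_simps)
    also have "\<dots> = qpoch t t N * (1 - t * t ^ N)"
      unfolding low high by (simp add: algebra_simps)
    finally show ?thesis by (simp add: qpoch_Suc)
  qed simp
qed simp

lemma qbinom_eq_div:
  "norm t < 1 \<Longrightarrow> k \<le> N \<Longrightarrow> qbinom t N k = qpoch t t N / (qpoch t t k * qpoch t t (N - k))"
  using qbinom_qpoch[of k N t] qpoch_self_nonzero[of t] by (simp add: field_simps)

lemma qpoch_qbinomial_expansion:
  "qpoch (-x) t N = (\<Sum>k\<le>N. qbinom t N k * t ^ (k choose 2) * x ^ k)"
proof (induction N arbitrary: x)
  case (Suc N)
  define f where "f k = qbinom t N k * t ^ (k choose 2) * (x * t) ^ k" for k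
  have choose_Suc: "Suc k choose 2 = (k choose 2) + k" for k
    by (simp add: numeral_2_eq_2)
  have "(\<Sum>k\<le>N. f k) = (\<Sum>k\<le>Suc N. f k)"
    by (simp add: f_def qbinom_eq_0)
  also have "\<dots> = 1 + (\<Sum>k\<le>N. qbinom t N (Suc k) * t ^ Suc k * t ^ (Suc k choose 2) * x ^ Suc k)"
    by (subst sum.atMost_Suc_shift) (simp add: f_def power_mult_distrib mult_ac numeral_2_eq_2)
  finally have shifted: "(\<Sum>k\<le>N. f k)
      = 1 + (\<Sum>k\<le>N. qbinom t N (Suc k) * t ^ Suc k * t ^ (Suc k choose 2) * x ^ Suc k)" .
  have scaled: "x * (\<Sum>k\<le>N. f k) = (\<Sum>k\<le>N. qbinom t N k * t ^ (Suc k choose 2) * x ^ Suc k)"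
    unfolding sum_distrib_left
  proof (rule sum.cong[OF refl])
    fix k
    have "t ^ (Suc k choose 2) = t ^ (k choose 2) * t ^ k"
      by (simp add: choose_Suc power_add)
    thus "x * f k = qbinom t N k * t ^ (Suc k choose 2) * x ^ Suc k"
      by (simp add: f_def power_mult_distrib mult_ac)
  qed
  have "qpoch (-x) t (Suc N) = (1 + x) * (\<Sum>k\<le>N. f k)"
    by (simp add: qpoch_Suc_shift Suc.IH[of "x * t"] f_def)
  also have "\<dots> = (\<Sum>k\<le>N. f k) + x * (\<Sum>k\<le>N. f k)"
    by (simp add: algebra_simps)
  also have "\<dots> = (\<Sum>k\<le>Suc N. qbinom t (Suc N) k * t ^ (k choose 2) * x ^ k)"
    by (subst scaled, subst shifted, subst sum.atMost_Suc_shift)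
      (simp add: algebra_simps sum.distrib numeral_2_eq_2)
  finally show ?case .
qed (simp add: numeral_2_eq_2)

lemma qpoch_self_bounds:
  assumes "norm t < 1"
  obtains L U where "0 < L" and "\<And>m. L \<le> norm (qpoch t t m)" and "\<And>m. norm (qpoch t t m) \<le> U"
proof -
  define r where "r = norm t"
  have r: "0 \<le> r" "r < 1" using assms by (auto simp: r_def)
  define g where "g j = 1 - (-r) * r ^ j" for j
  define h where "h j = 1 - r * r ^ j" for j
  have hpos: "0 < h j" for j
    using r mult_left_le[of "r ^ j" r] power_le_one[of r j] by (simp add: h_def)
  have h1: "h j \<le> 1" and g1: "1 \<le> g j" for j
    using r by (simp_all add: h_def g_def)
  have ch: "h has_prod prodinf h" and cg: "g has_prod prodinf g"
    unfolding h_def g_def using r by (intro convergent_prod_has_prod convergent_prod_qpoch; simp)+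
  have "prodinf h \<le> norm (qpoch t t m) \<and> norm (qpoch t t m) \<le> prodinf g" for m
  proof
    have "prodinf h \<le> prod h {..<m}"
      using ch hpos h1 by (intro prod_ge_prodinf) (auto intro: less_imp_le)
    also have "\<dots> \<le> (\<Prod>k<m. norm (1 - t * t ^ k))"
      using hpos norm_triangle_ineq2[of 1 "t * t ^ _"]
      by (intro prod_mono) (auto simp: h_def r_def norm_mult norm_power less_imp_le)
    also have "\<dots> = norm (qpoch t t m)" unfolding qpoch_def by (rule prod_norm)
    finally show "prodinf h \<le> norm (qpoch t t m)" .
    have "norm (qpoch t t m) = (\<Prod>k<m. norm (1 - t * t ^ k))"
      unfolding qpoch_def by (rule prod_norm[symmetric])
    also have "\<dots> \<le> prod g {..<m}"
      using norm_triangle_ineq4[of 1 "t * t ^ _"]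
      by (intro prod_mono) (auto simp: g_def r_def norm_mult norm_power)
    also have "\<dots> \<le> prodinf g"
      using cg g1 by (intro prod_le_prodinf) (auto intro: order_trans[OF zero_le_one])
    finally show "norm (qpoch t t m) \<le> prodinf g" .
  qed
  moreover have "0 < prodinf h"
    using ch hpos by (intro less_0_prodinf) (auto simp: has_prod_iff)
  ultimately show ?thesis using that by blast
qed

lemma qbinom_bounded:
  assumes "norm t < 1"
  obtains B where "\<And>N k. norm (qbinom t N k) \<le> B"
proof -
  obtain L U where L: "0 < L" "\<And>m. L \<le> norm (qpoch t t m)" and U: "\<And>m. norm (qpoch t t m) \<le> U"
    using qpoch_self_bounds[OF assms] by blast
  have U0: "0 \<le> U" using U[of 0] by simp
  have "norm (qbinom t N k) \<le> U / (L * L)" for N k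
  proof (cases "k \<le> N")
    case True
    have "norm (qbinom t N k) = norm (qpoch t t N) / (norm (qpoch t t k) * norm (qpoch t t (N - k)))"
      using qbinom_eq_div[OF assms True] by (simp add: norm_mult norm_divide)
    also have "\<dots> \<le> U / (L * L)"
      using L U U0 by (intro frac_le mult_mono) (auto intro: less_imp_le)
    finally show ?thesis .
  qed (use U0 L in \<open>simp add: qbinom_eq_0\<close>)
  thus ?thesis using that by blast
qed

lemma qpoch_self_ratio_LIMSEQ:
  assumes "norm t < 1" and "filterlim f sequentially sequentially"
    and "filterlim g sequentially sequentially" and "filterlim h sequentially sequentially"
  shows "(\<lambda>n. qpoch t t (f n) / (qpoch t t (g n) * qpoch t t (h n))) \<longlonglongrightarrow> 1 / qpochinf t t"
proof -
  have lim: "(\<lambda>n. qpoch t t (u n)) \<longlonglongrightarrow> qpochinf t t" if "filterlim u sequentially sequentially" for u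
    using filterlim_compose[OF qpoch_LIMSEQ[OF assms(1)] that] .
  have "(\<lambda>n. qpoch t t (f n) / (qpoch t t (g n) * qpoch t t (h n)))
      \<longlonglongrightarrow> qpochinf t t / (qpochinf t t * qpochinf t t)"
    using qpochinf_self_nonzero[OF assms(1)] assms(2-4)
    by (intro tendsto_divide tendsto_mult lim) auto
  thus ?thesis using qpochinf_self_nonzero[OF assms(1)] by simp
qed

lemma qbinom_LIMSEQ:
  assumes "norm t < 1"
  shows "(\<lambda>N. qbinom t N j) \<longlonglongrightarrow> 1 / qpoch t t j"
proof -
  have nz: "qpochinf t t \<noteq> 0" "qpoch t t j \<noteq> 0"
    using qpochinf_self_nonzero[OF assms] qpoch_self_nonzero[OF assms] by auto
  have "(\<lambda>N. qpoch t t N / (qpoch t t j * qpoch t t (N - j)))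
      \<longlonglongrightarrow> qpochinf t t / (qpoch t t j * qpochinf t t)"
    using nz filterlim_compose[OF qpoch_LIMSEQ[OF assms] filterlim_minus_const_nat_at_top]
    by (intro tendsto_divide tendsto_mult[OF tendsto_const] qpoch_LIMSEQ[OF assms]) auto
  hence lim: "(\<lambda>N. qpoch t t N / (qpoch t t j * qpoch t t (N - j))) \<longlonglongrightarrow> 1 / qpoch t t j"
    using nz by simp
  have "\<forall>\<^sub>F N in sequentially. qpoch t t N / (qpoch t t j * qpoch t t (N - j)) = qbinom t N j"
    using eventually_ge_at_top[of j] by eventually_elim (rule qbinom_eq_div[OF assms, symmetric])
  with lim show ?thesis by (rule Lim_transform_eventually)
qed

lemma qbinom_central_LIMSEQ:
  assumes "norm t < 1"
  shows "(\<lambda>n. qbinom t (2 * n) (n + j)) \<longlonglongrightarrow> 1 / qpochinf t t"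
    and "(\<lambda>n. qbinom t (2 * n) (n - j)) \<longlonglongrightarrow> 1 / qpochinf t t"
proof -
  have lim: "(\<lambda>n. qpoch t t (2 * n) / (qpoch t t (n + j) * qpoch t t (n - j))) \<longlonglongrightarrow> 1 / qpochinf t t"
    by (intro qpoch_self_ratio_LIMSEQ assms mult_nat_left_at_top filterlim_add_const_nat_at_top
          filterlim_minus_const_nat_at_top filterlim_ident) simp
  have "\<forall>\<^sub>F n in sequentially. qpoch t t (2 * n) / (qpoch t t (n + j) * qpoch t t (n - j))
          = qbinom t (2 * n) (n + j)"
    using eventually_ge_at_top[of j]
    by eventually_elim (subst qbinom_eq_div[OF assms], auto simp: mult_2)
  with lim show "(\<lambda>n. qbinom t (2 * n) (n + j)) \<longlonglongrightarrow> 1 / qpochinf t t"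
    by (rule Lim_transform_eventually)
  have "\<forall>\<^sub>F n in sequentially. qpoch t t (2 * n) / (qpoch t t (n + j) * qpoch t t (n - j))
          = qbinom t (2 * n) (n - j)"
    using eventually_ge_at_top[of j]
    by eventually_elim (subst qbinom_eq_div[OF assms], auto simp: mult_2 mult.commute)
  with lim show "(\<lambda>n. qbinom t (2 * n) (n - j)) \<longlonglongrightarrow> 1 / qpochinf t t"
    by (rule Lim_transform_eventually)
qed


section \<open>Euler's identities and the q-binomial theorem\<close>

lemma euler_expansion_qpochinf:
  assumes t: "norm t < 1" and w: "norm w < 1"
  shows "(\<lambda>j. t ^ (j choose 2) * w ^ j / qpoch t t j) sums qpochinf (-w) t"
    and "summable (\<lambda>j. norm (t ^ (j choose 2) * w ^ j / qpoch t t j))"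
proof -
  obtain B where B: "\<And>N k. norm (qbinom t N k) \<le> B" using qbinom_bounded[OF t] by blast
  have B0: "0 \<le> B" using B[of 0 0] by simp
  define a where "a j N = qbinom t N j * t ^ (j choose 2) * w ^ j" for j N
  define b where "b j = t ^ (j choose 2) * w ^ j / qpoch t t j" for j
  have "(\<lambda>N. a j N) \<longlonglongrightarrow> 1 / qpoch t t j * t ^ (j choose 2) * w ^ j" for j
    unfolding a_def by (intro tendsto_mult qbinom_LIMSEQ[OF t] tendsto_const)
  hence lim: "(\<lambda>N. a j N) \<longlonglongrightarrow> b j" for j
    by (simp add: b_def)
  have "norm (a k n) \<le> B * norm w ^ k" for k n
  proof -
    have "norm (a k n) = norm (qbinom t n k) * norm t ^ (k choose 2) * norm w ^ k"
      by (simp add: a_def norm_mult norm_power)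
    also have "\<dots> \<le> B * 1 * norm w ^ k"
      using B B0 t by (intro mult_mono) (auto simp: power_le_one)
    finally show ?thesis by simp
  qed
  hence bound: "\<forall>\<^sub>F (k, n) in at_top \<times>\<^sub>F sequentially. norm (a k n) \<le> B * norm w ^ k"
    by (simp add: always_eventually)
  have "summable (\<lambda>k. B * norm w ^ k)"
    using w by (intro summable_mult summable_geometric) auto
  note tannery = tannerys_theorem[OF lim bound this trivial_limit_sequentially]
  have "(\<Sum>j. a j N) = qpoch (-w) t N" for N
  proof -
    have "(\<Sum>j. a j N) = (\<Sum>j\<le>N. a j N)"
      by (rule suminf_finite) (auto simp: a_def qbinom_eq_0)
    thus ?thesis by (simp add: qpoch_qbinomial_expansion a_def)
  qed
  hence "(\<lambda>N. qpoch (-w) t N) \<longlonglongrightarrow> suminf b" using tannery by simp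
  hence "suminf b = qpochinf (-w) t" using qpoch_LIMSEQ[OF t] LIMSEQ_unique by blast
  moreover have "summable (\<lambda>j. norm (b j))" using tannery by simp
  ultimately show "b sums qpochinf (-w) t" "summable (\<lambda>j. norm (b j))"
    using summable_norm_cancel summable_sums by (metis, blast)
qed

definition qexp :: "complex \<Rightarrow> complex \<Rightarrow> complex" where
  "qexp t z = (\<Sum>k. z ^ k / qpoch t t k)"

lemma summable_norm_qexp:
  assumes t: "norm t < 1" and z: "norm z < 1"
  shows "summable (\<lambda>k. norm (z ^ k / qpoch t t k))"
proof -
  obtain L where L: "0 < L" "\<And>m. L \<le> norm (qpoch t t m)"
    using qpoch_self_bounds[OF t] by metis
  have "norm (norm (z ^ k / qpoch t t k)) \<le> norm z ^ k / L" for k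
    using L by (simp add: norm_divide norm_power frac_le)
  moreover have "summable (\<lambda>k. norm z ^ k / L)"
    using z by (intro summable_divide summable_geometric) auto
  ultimately show ?thesis by (blast intro: summable_comparison_test')
qed

text \<open>Cauchy product of Euler's two expansions; the coefficients are recognised by the finite
  q-binomial theorem.\<close>

lemma qpoch_ratio_sums_qpochinf_times_qexp:
  assumes t: "norm t < 1" and z: "norm z < 1" and xz: "norm (x * z) < 1"
  shows "(\<lambda>m. qpoch (-x) t m / qpoch t t m * z ^ m) sums (qpochinf (-(x * z)) t * qexp t z)"
proof -
  define a where "a j = t ^ (j choose 2) * (x * z) ^ j / qpoch t t j" for j
  define b where "b = (\<lambda>k. z ^ k / qpoch t t k)"
  have "(\<lambda>m. \<Sum>i\<le>m. a i * b (m - i)) sums (suminf a * suminf b)"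
    using euler_expansion_qpochinf(2)[OF t xz] summable_norm_qexp[OF t z]
    unfolding a_def b_def by (rule Cauchy_product_sums)
  moreover have "suminf a = qpochinf (-(x * z)) t"
    using euler_expansion_qpochinf(1)[OF t xz] unfolding a_def by (rule sums_unique[symmetric])
  moreover have "suminf b = qexp t z" by (simp add: b_def qexp_def)
  moreover have "(\<Sum>i\<le>m. a i * b (m - i)) = qpoch (-x) t m / qpoch t t m * z ^ m" for m
  proof -
    have "(\<Sum>i\<le>m. a i * b (m - i)) = (\<Sum>i\<le>m. qbinom t m i * t ^ (i choose 2) * x ^ i) / qpoch t t m * z ^ m"
      unfolding sum_divide_distrib sum_distrib_right
    proof (rule sum.cong[OF refl])
      fix i assume "i \<in> {..m}"
      hence im: "i \<le> m" by simp
      have "z ^ i * z ^ (m - i) = z ^ m" using im by (simp flip: power_add)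
      thus "a i * b (m - i) = qbinom t m i * t ^ (i choose 2) * x ^ i / qpoch t t m * z ^ m"
        unfolding a_def b_def qbinom_eq_div[OF t im] using qpoch_self_nonzero[OF t]
        by (simp add: field_simps power_mult_distrib)
    qed
    thus ?thesis by (simp add: qpoch_qbinomial_expansion)
  qed
  ultimately show ?thesis by simp
qed

lemma qpochinf_times_qexp:
  assumes t: "norm t < 1" and z: "norm z < 1"
  shows "qpochinf z t * qexp t z = 1"
proof -
  have "(\<lambda>m. qpoch (-(-1)) t m / qpoch t t m * z ^ m) sums (qpochinf (-((-1) * z)) t * qexp t z)"
    using z by (intro qpoch_ratio_sums_qpochinf_times_qexp t) auto
  moreover have "qpoch (-(-1)) t m / qpoch t t m * z ^ m = (if m = 0 then 1 else 0)" for m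
    by (cases m) (simp_all add: qpoch_Suc_shift)
  ultimately have "(\<lambda>m. if m = 0 then 1 else 0) sums (qpochinf z t * qexp t z)" by simp
  moreover have "(\<lambda>m. if m = 0 then 1 else 0 :: complex) sums 1"
    using sums_single[of 0 "\<lambda>_. 1::complex"] by simp
  ultimately show ?thesis using sums_unique2 by metis
qed

theorem qbinomial_theorem:
  assumes t: "norm t < 1" and z: "norm z < 1" and az: "norm (a * z) < 1"
  shows "(\<lambda>m. qpoch a t m / qpoch t t m * z ^ m) sums (qpochinf (a * z) t / qpochinf z t)"
proof -
  have "(\<lambda>m. qpoch (-(-a)) t m / qpoch t t m * z ^ m) sums (qpochinf (-((-a) * z)) t * qexp t z)"
    using az by (intro qpoch_ratio_sums_qpochinf_times_qexp t z) simp
  moreover have "qexp t z = 1 / qpochinf z t"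
  proof -
    have "qpochinf z t \<noteq> 0" using qpochinf_times_qexp[OF t z] by auto
    thus ?thesis using qpochinf_times_qexp[OF t z] by (simp add: eq_divide_eq mult.commute)
  qed
  ultimately show ?thesis by simp
qed


section \<open>The Jacobi triple product at \<open>z = q\<close>\<close>

lemma sum_atMost_double_symmetric:
  fixes c :: "nat \<Rightarrow> 'a::comm_monoid_add"
  shows "(\<Sum>k\<le>2*n. c k) = (\<Sum>j\<le>n. if j = 0 then c n else c (n + j) + c (n - j))"
proof -
  have "(\<Sum>k\<le>2*n. c k) = (\<Sum>k<n. c k) + (\<Sum>k\<in>{n..2*n}. c k)"
    by (subst sum.union_disjoint[symmetric]) (auto intro!: sum.cong)
  also have "(\<Sum>k\<in>{n..2*n}. c k) = (\<Sum>j\<le>n. c (n + j))"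
    using sum.shift_bounds_cl_nat_ivl[of c 0 n n]
    by (simp add: mult_2 atLeast0AtMost add.commute)
  also have "(\<Sum>k<n. c k) = (\<Sum>j\<le>n. if j = 0 then 0 else c (n - j))"
  proof (cases n)
    case (Suc m)
    have "(\<Sum>j\<le>n. if j = 0 then 0 else c (n - j)) = (\<Sum>j<n. c (n - Suc j))"
      unfolding Suc by (subst sum.atMost_Suc_shift) (simp add: lessThan_Suc_atMost)
    also have "\<dots> = (\<Sum>k<n. c k)" by (rule sum.nat_diff_reindex)
    finally show ?thesis by simp
  qed simp
  finally show ?thesis
    unfolding sum.distrib[symmetric] by (auto simp: add.commute intro: sum.cong)
qed

lemma prod_power_odd: "(\<Prod>i<n. (q::'a::comm_monoid_mult) ^ (2 * i + 1)) = q ^ (n * n)"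
proof (induction n)
  case (Suc n)
  have "(\<Prod>i<Suc n. q ^ (2 * i + 1)) = q ^ (n * n + (2 * n + 1))"
    using Suc by (simp add: power_add mult_ac)
  also have "n * n + (2 * n + 1) = Suc n * Suc n" by simp
  finally show ?case .
qed simp

text \<open>Reverse the order of the factors: q^(2i+1) times the factor of index n-1-i is the factor
  of index i of (-q;q^2)_n.\<close>

lemma qpoch_reflect:
  fixes q :: complex
  assumes q: "q \<noteq> 0"
  shows "q ^ (n * n) * qpoch (-(q / q ^ (2 * n))) (q\<^sup>2) n = qpoch (-q) (q\<^sup>2) n"
proof -
  define x where "x = q / q ^ (2 * n)"
  have "qpoch (-x) (q\<^sup>2) n = (\<Prod>i<n. 1 + x * (q\<^sup>2) ^ (n - Suc i))"
    unfolding qpoch_def by (subst prod.nat_diff_reindex[symmetric]) simp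
  hence "q ^ (n * n) * qpoch (-x) (q\<^sup>2) n = (\<Prod>i<n. q ^ (2 * i + 1) * (1 + x * (q\<^sup>2) ^ (n - Suc i)))"
    by (simp add: prod_power_odd[symmetric] prod.distrib)
  also have "\<dots> = (\<Prod>i<n. 1 - (-q) * (q\<^sup>2) ^ i)"
  proof (rule prod.cong[OF refl])
    fix i assume "i \<in> {..<n}"
    then obtain e where e: "n = e + i + 1"
      by (metis lessThan_iff less_imp_Suc_add add.commute add_Suc_right Suc_eq_plus1 add.assoc)
    have "x * (q\<^sup>2) ^ (n - Suc i) * q ^ (2 * i + 1) = q ^ (2 * n) / q ^ (2 * n)"
      by (simp add: x_def e power_add power_mult[symmetric] algebra_simps)
    also have "\<dots> = 1" using q by simp
    finally have inverse: "x * (q\<^sup>2) ^ (n - Suc i) * q ^ (2 * i + 1) = 1" .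
    have "q ^ (2 * i + 1) * (1 + x * (q\<^sup>2) ^ (n - Suc i))
        = q ^ (2 * i + 1) + x * (q\<^sup>2) ^ (n - Suc i) * q ^ (2 * i + 1)"
      by (simp add: algebra_simps)
    also have "\<dots> = 1 - (-q) * (q\<^sup>2) ^ i"
      unfolding inverse by (simp add: power_mult)
    finally show "q ^ (2 * i + 1) * (1 + x * (q\<^sup>2) ^ (n - Suc i)) = 1 - (-q) * (q\<^sup>2) ^ i" .
  qed
  finally show ?thesis by (simp add: x_def qpoch_def)
qed

lemma power_square_shift:
  fixes q :: complex
  assumes q: "q \<noteq> 0" and e: "n * n + k * k = 2 * n * k + j * j"
  shows "q ^ (n * n) * (q\<^sup>2) ^ (k choose 2) * (q / q ^ (2 * n)) ^ k = q ^ (j * j)"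
proof -
  have "2 * (k choose 2) + k = k * k"
    by (induction k) (simp_all add: numeral_2_eq_2 algebra_simps)
  hence "(q\<^sup>2) ^ (k choose 2) * q ^ k = q ^ (k * k)"
    by (simp add: power_mult[symmetric] power_add[symmetric])
  hence "q ^ (n * n) * (q\<^sup>2) ^ (k choose 2) * (q / q ^ (2 * n)) ^ k = q ^ (n * n + k * k) / q ^ (2 * n * k)"
    by (simp add: power_divide power_add power_mult[symmetric] mult_ac)
  also have "\<dots> = q ^ (2 * n * k) * q ^ (j * j) / q ^ (2 * n * k)" unfolding e power_add ..
  also have "\<dots> = q ^ (j * j)" using q by simp
  finally show ?thesis .
qed

definition qbinom_central_pair :: "complex \<Rightarrow> nat \<Rightarrow> nat \<Rightarrow> complex" where
  "qbinom_central_pair t n j =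
     (if j = 0 then qbinom t (2 * n) n else qbinom t (2 * n) (n + j) + qbinom t (2 * n) (n - j))"

text \<open>Since (-q;q^2)_n^2 = q^(n^2) (-q^(1-2n);q^2)_2n, the finite q-binomial theorem expands it;
  the terms k = n + j and k = n - j both carry the power q^(j^2).\<close>

lemma qpoch_square_expansion:
  fixes q :: complex
  assumes q: "q \<noteq> 0"
  shows "qpoch (-q) (q\<^sup>2) n ^ 2 = (\<Sum>j\<le>n. qbinom_central_pair (q\<^sup>2) n j * q ^ (j * j))"
proof -
  define x where "x = q / q ^ (2 * n)"
  define c where "c k = qbinom (q\<^sup>2) (2 * n) k * (q ^ (n * n) * (q\<^sup>2) ^ (k choose 2) * x ^ k)" for k
  have "x * (q\<^sup>2) ^ n = q" using q by (simp add: x_def power_mult)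
  hence "qpoch (-x) (q\<^sup>2) (2 * n) = qpoch (-x) (q\<^sup>2) n * qpoch (-q) (q\<^sup>2) n"
    by (simp add: mult_2 qpoch_add)
  hence "qpoch (-q) (q\<^sup>2) n ^ 2 = q ^ (n * n) * qpoch (-x) (q\<^sup>2) (2 * n)"
    using qpoch_reflect[OF q, of n] by (simp add: x_def power2_eq_square mult_ac)
  also have "\<dots> = (\<Sum>k\<le>2*n. c k)"
    by (simp add: qpoch_qbinomial_expansion c_def sum_distrib_left mult_ac)
  also have "\<dots> = (\<Sum>j\<le>n. if j = 0 then c n else c (n + j) + c (n - j))"
    by (rule sum_atMost_double_symmetric)
  also have "\<dots> = (\<Sum>j\<le>n. qbinom_central_pair (q\<^sup>2) n j * q ^ (j * j))"
  proof (rule sum.cong[OF refl])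
    fix j assume "j \<in> {..n}"
    then obtain k where k: "n = k + j" by (metis atMost_iff le_add_diff_inverse2)
    have "n * n + (n + j) * (n + j) = 2 * n * (n + j) + j * j"
      and "n * n + (n - j) * (n - j) = 2 * n * (n - j) + j * j"
      and "n * n + n * n = 2 * n * n + 0 * 0"
      unfolding k by (simp_all add: algebra_simps)
    from this[THEN power_square_shift[OF q]]
    show "(if j = 0 then c n else c (n + j) + c (n - j)) = qbinom_central_pair (q\<^sup>2) n j * q ^ (j * j)"
      by (simp add: c_def x_def qbinom_central_pair_def algebra_simps)
  qed
  finally show ?thesis .
qed

lemma qbinom_central_pair_bounded:
  assumes "norm t < 1"
  obtains B where "\<And>n j. norm (qbinom_central_pair t n j) \<le> B"
proof -
  obtain B where B: "\<And>N k. norm (qbinom t N k) \<le> B" using qbinom_bounded[OF assms] by blast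
  have "norm (qbinom_central_pair t n j) \<le> 2 * B" for n j
    using B[of "2 * n" n] B[of "2 * n" "n + j"] B[of "2 * n" "n - j"] B[of 0 0]
      norm_triangle_ineq[of "qbinom t (2 * n) (n + j)" "qbinom t (2 * n) (n - j)"]
    by (auto simp: qbinom_central_pair_def)
  thus ?thesis using that by blast
qed

lemma qbinom_central_pair_LIMSEQ:
  assumes "norm t < 1"
  shows "(\<lambda>n. qbinom_central_pair t n j) \<longlonglongrightarrow> (if j = 0 then 1 else 2) / qpochinf t t"
proof (cases "j = 0")
  case True
  thus ?thesis using qbinom_central_LIMSEQ(1)[OF assms, of 0] by (simp add: qbinom_central_pair_def)
next
  case False
  have "(\<lambda>n. qbinom t (2 * n) (n + j) + qbinom t (2 * n) (n - j))
      \<longlonglongrightarrow> 1 / qpochinf t t + 1 / qpochinf t t"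
    by (intro tendsto_add qbinom_central_LIMSEQ[OF assms])
  thus ?thesis using False by (simp add: qbinom_central_pair_def add_divide_distrib[symmetric])
qed

definition theta_pos :: "complex \<Rightarrow> complex" where
  "theta_pos x = (\<Sum>n. x ^ (Suc n)\<^sup>2)"

lemma norm_power_square_le:
  fixes q :: complex
  assumes "norm q < 1"
  shows "norm (q ^ (j * j)) \<le> norm q ^ j"
proof (cases "j = 0")
  case False
  hence "j \<le> j * j" by simp
  thus ?thesis using assms by (simp add: norm_power power_decreasing)
qed simp

lemma summable_norm_theta_pos:
  fixes q :: complex
  assumes "norm q < 1"
  shows "summable (\<lambda>n. norm (q ^ (Suc n)\<^sup>2))"
proof (rule summable_comparison_test')
  show "summable (\<lambda>n. norm q ^ Suc n)" using assms by (simp add: summable_geometric)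
  show "norm (norm (q ^ (Suc n)\<^sup>2)) \<le> norm q ^ Suc n" for n
    using norm_power_square_le[OF assms, of "Suc n"] by (simp add: power2_eq_square)
qed

lemma theta_pos_sums: "norm x < 1 \<Longrightarrow> (\<lambda>n. x ^ (Suc n)\<^sup>2) sums theta_pos x"
  unfolding theta_pos_def by (rule summable_sums[OF summable_norm_cancel[OF summable_norm_theta_pos]])

theorem jacobi_triple_product_special:
  fixes q :: complex
  assumes qn: "norm q < 1"
  shows "1 + 2 * theta_pos q = qpochinf (q\<^sup>2) (q\<^sup>2) * qpochinf (-q) (q\<^sup>2) ^ 2"
proof (cases "q = 0")
  case True
  thus ?thesis by (simp add: theta_pos_def qpochinf_def power2_eq_square)
next
  case q: False
  define t where "t = q\<^sup>2"
  have t: "norm t < 1" unfolding t_def using qn by (rule norm_power2_less_one)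
  obtain B where B: "\<And>n j. norm (qbinom_central_pair t n j) \<le> B"
    using qbinom_central_pair_bounded[OF t] by blast
  define a where "a j n = (if j \<le> n then qbinom_central_pair t n j * q ^ (j * j) else 0)" for j n
  define b where "b j = (if j = 0 then 1 else 2) / qpochinf t t * q ^ (j * j)" for j
  have lim: "(\<lambda>n. a j n) \<longlonglongrightarrow> b j" for j
  proof -
    have "(\<lambda>n. qbinom_central_pair t n j * q ^ (j * j)) \<longlonglongrightarrow> b j"
      unfolding b_def by (intro tendsto_mult qbinom_central_pair_LIMSEQ[OF t] tendsto_const)
    moreover have "\<forall>\<^sub>F n in sequentially. qbinom_central_pair t n j * q ^ (j * j) = a j n"
      using eventually_ge_at_top[of j] by eventually_elim (simp add: a_def)
    ultimately show ?thesis by (rule Lim_transform_eventually)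
  qed
  have "norm (a k n) \<le> B * norm q ^ k" for k n
    using B[of n k] norm_power_square_le[OF qn, of k] order_trans[OF norm_ge_zero B]
    by (auto simp: a_def norm_mult intro: mult_mono)
  hence bound: "\<forall>\<^sub>F (k, n) in at_top \<times>\<^sub>F sequentially. norm (a k n) \<le> B * norm q ^ k"
    by (simp add: always_eventually)
  have "summable (\<lambda>k. B * norm q ^ k)" using qn by (intro summable_mult summable_geometric) auto
  note tannery = tannerys_theorem[OF lim bound this trivial_limit_sequentially]
  have "(\<Sum>j. a j n) = qpoch (-q) t n ^ 2" for n
  proof -
    have "(\<Sum>j. a j n) = (\<Sum>j\<le>n. a j n)" by (rule suminf_finite) (auto simp: a_def)
    thus ?thesis by (simp add: a_def t_def qpoch_square_expansion[OF q])
  qed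
  hence "(\<lambda>n. qpoch (-q) t n ^ 2) \<longlonglongrightarrow> suminf b" using tannery by simp
  moreover have "(\<lambda>n. qpoch (-q) t n ^ 2) \<longlonglongrightarrow> qpochinf (-q) t ^ 2"
    by (intro tendsto_power qpoch_LIMSEQ t)
  ultimately have "suminf b = qpochinf (-q) t ^ 2" using LIMSEQ_unique by blast
  moreover have "suminf b = b 0 + (\<Sum>n. b (Suc n))"
    using tannery summable_norm_cancel[of b] by (simp add: suminf_split_head)
  moreover have "(\<Sum>n. b (Suc n)) = 2 / qpochinf t t * theta_pos q"
    using sums_mult[OF theta_pos_sums[OF qn], of "2 / qpochinf t t"]
    by (intro sums_unique[symmetric]) (simp add: b_def power2_eq_square)
  ultimately show ?thesis
    using qpochinf_self_nonzero[OF t] by (simp add: b_def t_def field_simps)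
qed


section \<open>Products as theta series\<close>

lemma qpochinf_neg_times_odd:
  assumes t: "norm t < 1"
  shows "qpochinf (-t) t * qpochinf t (t\<^sup>2) = 1"
proof -
  have t2: "norm (t\<^sup>2) < 1" using t by (rule norm_power2_less_one)
  have "qpochinf t t * qpochinf (-t) t = qpochinf (t\<^sup>2) (t\<^sup>2)"
    by (rule qpochinf_times_neg[OF t])
  moreover have "qpochinf t t = qpochinf t (t\<^sup>2) * qpochinf (t\<^sup>2) (t\<^sup>2)"
    using qpochinf_even_odd[OF t, of t] by (simp add: power2_eq_square)
  ultimately have "qpochinf (t\<^sup>2) (t\<^sup>2) * (qpochinf (-t) t * qpochinf t (t\<^sup>2)) = qpochinf (t\<^sup>2) (t\<^sup>2) * 1"
    by (simp add: mult_ac)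
  thus ?thesis using qpochinf_self_nonzero[OF t2] by simp
qed

lemma qpochinf_neg_one: "norm p < 1 \<Longrightarrow> qpochinf (-1) p = 2 * qpochinf (-p) p"
  using qpochinf_shift[of p "-1" 1] by (simp add: qpoch_def)

lemma qpochinf_self_div_neg_one:
  assumes p: "norm p < 1"
  shows "qpochinf p p / qpochinf (-1) p = (1 + 2 * theta_pos (-p)) / 2"
proof -
  have euler: "qpochinf (-p) p * qpochinf p (p\<^sup>2) = 1"
    by (rule qpochinf_neg_times_odd[OF p])
  hence "qpochinf p (p\<^sup>2) = 1 / qpochinf (-p) p"
    by (auto simp: eq_divide_eq mult.commute)
  hence "qpochinf p p / qpochinf (-1) p = qpochinf p p * qpochinf p (p\<^sup>2) / 2"
    by (simp add: qpochinf_neg_one[OF p])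
  also have "\<dots> = qpochinf (p\<^sup>2) (p\<^sup>2) * qpochinf p (p\<^sup>2) ^ 2 / 2"
    using qpochinf_even_odd[OF p, of p] by (simp add: power2_eq_square)
  also have "\<dots> = (1 + 2 * theta_pos (-p)) / 2"
    using jacobi_triple_product_special[of "-p"] p by simp
  finally show ?thesis .
qed

lemma qpochinf_quotient_theta:
  assumes q: "norm q < 1"
  shows "qpochinf (q\<^sup>2) (q\<^sup>2) / qpochinf (-1) (q\<^sup>2) * (qpochinf (-q) (q\<^sup>2) / qpochinf q (q\<^sup>2))
           = (1 + 2 * theta_pos q) / 2"
proof -
  define p where "p = q\<^sup>2"
  have p: "norm p < 1" unfolding p_def using q by (rule norm_power2_less_one)
  have "qpochinf (-q) q = qpochinf (-q) p * qpochinf (-p) p"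
    using qpochinf_even_odd[OF q, of "-q"] by (simp add: p_def power2_eq_square)
  with qpochinf_neg_times_odd[OF q]
  have euler: "qpochinf (-p) p * qpochinf q p * qpochinf (-q) p = 1"
    by (simp add: p_def mult_ac)
  hence "qpochinf (-p) p * qpochinf q p = 1 / qpochinf (-q) p"
    by (auto simp: eq_divide_eq)
  moreover have "qpochinf p p / qpochinf (-1) p * (qpochinf (-q) p / qpochinf q p)
      = qpochinf p p * qpochinf (-q) p / (2 * (qpochinf (-p) p * qpochinf q p))"
    by (simp add: qpochinf_neg_one[OF p] field_simps)
  ultimately show ?thesis
    using jacobi_triple_product_special[OF q] by (simp add: p_def power2_eq_square)
qed

section \<open>The summands at \<open>z = \<i>\<close>\<close>

definition Sbar_summand :: "complex \<Rightarrow> complex \<Rightarrow> nat \<Rightarrow> complex" where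
  "Sbar_summand z q m = q ^ m * qpochinf (- (q ^ (m + 1))) q * qpochinf (q ^ (m + 1)) q
      / (qpochinf (z * q ^ m) q * qpochinf (inverse z * q ^ m) q)"

lemma Sbar_eq: "Sbar z q = (\<Sum>n. Sbar_summand z q (Suc n))"
  and Sbar1_eq: "Sbar1 z q = (\<Sum>n. Sbar_summand z q (2 * n + 1))"
  and Sbar2_eq: "Sbar2 z q = (\<Sum>n. Sbar_summand z q (2 * Suc n))"
  by (simp_all add: Sbar_def Sbar1_def Sbar2_def Sbar_summand_def)

lemma Sbar_summand_i:
  fixes q :: complex
  assumes q: "norm q < 1"
  defines "p \<equiv> q\<^sup>2"
  shows "Sbar_summand \<i> q m = qpochinf p p / qpochinf (-1) p * (qpoch (-1) p m / qpoch p p m * q ^ m)"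
proof -
  have p: "norm p < 1" unfolding p_def using q by (rule norm_power2_less_one)
  have num: "qpochinf (- (q ^ (m + 1))) q * qpochinf (q ^ (m + 1)) q = qpochinf p p / qpoch p p m"
    using qpochinf_times_neg[OF q, of "- (q ^ (m + 1))"] qpochinf_shift[OF p, of p m] qpoch_self_nonzero[OF p]
    by (simp add: p_def field_simps power_mult_distrib flip: power_mult)
  have den: "qpochinf (\<i> * q ^ m) q * qpochinf (inverse \<i> * q ^ m) q = qpochinf (-1) p / qpoch (-1) p m"
    using qpochinf_times_neg[OF q, of "\<i> * q ^ m"] qpochinf_shift[OF p, of "-1" m] qpoch_neg_one_nonzero[OF p]
    by (simp add: p_def field_simps power_mult_distrib flip: power_mult)
  have "Sbar_summand \<i> q m = q ^ m * (qpochinf (- (q ^ (m + 1))) q * qpochinf (q ^ (m + 1)) q)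
      / (qpochinf (\<i> * q ^ m) q * qpochinf (inverse \<i> * q ^ m) q)"
    unfolding Sbar_summand_def by (simp only: mult.assoc)
  also have "\<dots> = q ^ m * (qpochinf p p / qpoch p p m) / (qpochinf (-1) p / qpoch (-1) p m)"
    unfolding num den ..
  also have "\<dots> = qpochinf p p / qpochinf (-1) p * (qpoch (-1) p m / qpoch p p m * q ^ m)"
    using qpoch_neg_one_nonzero[OF p] qpoch_self_nonzero[OF p] qpochinf_neg_one_nonzero[OF p]
    by (simp add: field_simps)
  finally show ?thesis .
qed

lemma Sbar_summand_i_sums:
  fixes q :: complex
  assumes q: "norm q < 1"
  shows "Sbar_summand \<i> q 0 = (1 + 2 * theta_pos (-(q\<^sup>2))) / 2"
    and "Sbar_summand \<i> q sums ((1 + 2 * theta_pos q) / 2)"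
    and "(\<lambda>m. (-1) ^ m * Sbar_summand \<i> q m) sums ((1 + 2 * theta_pos (-q)) / 2)"
proof -
  define p where "p = q\<^sup>2"
  have p: "norm p < 1" unfolding p_def using q by (rule norm_power2_less_one)
  define C where "C = qpochinf p p / qpochinf (-1) p"
  have summand: "Sbar_summand \<i> q = (\<lambda>m. C * (qpoch (-1) p m / qpoch p p m * q ^ m))"
    unfolding C_def p_def by (rule ext) (rule Sbar_summand_i[OF q])
  show "Sbar_summand \<i> q 0 = (1 + 2 * theta_pos (-(q\<^sup>2))) / 2"
    using qpochinf_self_div_neg_one[OF p] by (simp add: summand C_def p_def)
  have "(\<lambda>m. qpoch (-1) p m / qpoch p p m * z ^ m) sums (qpochinf (-z) p / qpochinf z p)"
    if "norm z < 1" for z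
    using qbinomial_theorem[OF p that, where a="-1"] that by simp
  from sums_mult[OF this, of _ C]
  have sums: "(\<lambda>m. C * (qpoch (-1) p m / qpoch p p m * z ^ m)) sums (C * (qpochinf (-z) p / qpochinf z p))"
    if "norm z < 1" for z
    using that by blast
  have "C * (qpochinf (-q) p / qpochinf q p) = (1 + 2 * theta_pos q) / 2"
    unfolding C_def p_def by (rule qpochinf_quotient_theta[OF q])
  thus "Sbar_summand \<i> q sums ((1 + 2 * theta_pos q) / 2)"
    using sums[OF q] unfolding summand by argo
  have "norm (-q) < 1" using q by simp
  have "C * (qpochinf (-(-q)) p / qpochinf (-q) p) = (1 + 2 * theta_pos (-q)) / 2"
    unfolding C_def p_def using qpochinf_quotient_theta[OF \<open>norm (-q) < 1\<close>] by simp
  moreover have "(\<lambda>m. (-1) ^ m * Sbar_summand \<i> q m) = (\<lambda>m. C * (qpoch (-1) p m / qpoch p p m * (-q) ^ m))"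
    by (simp add: summand fun_eq_iff power_minus[of q] mult_ac)
  ultimately show "(\<lambda>m. (-1) ^ m * Sbar_summand \<i> q m) sums ((1 + 2 * theta_pos (-q)) / 2)"
    using sums[OF \<open>norm (-q) < 1\<close>] by argo
qed


lemma sums_even_odd_parts:
  fixes f :: "nat \<Rightarrow> 'a::real_normed_field"
  assumes s: "f sums s" and s': "(\<lambda>m. (-1) ^ m * f m) sums s'"
  shows "(\<lambda>n. f (2 * n)) sums ((s + s') / 2)" and "(\<lambda>n. f (2 * n + 1)) sums ((s - s') / 2)"
proof -
  define g where "g m = (f m + (-1) ^ m * f m) / 2" for m
  define h where "h m = (f m - (-1) ^ m * f m) / 2" for m
  have "(\<lambda>n. g (2 * n)) sums ((s + s') / 2)"
  proof (subst sums_mono_reindex)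
    show "strict_mono (\<lambda>n::nat. 2 * n)" by (simp add: strict_mono_def)
    show "g m = 0" if "m \<notin> range (\<lambda>n::nat. 2 * n)" for m
    proof -
      have "odd m" using that by (metis evenE rangeI)
      thus ?thesis by (simp add: g_def)
    qed
    show "g sums ((s + s') / 2)" unfolding g_def by (intro sums_divide sums_add s s')
  qed
  thus "(\<lambda>n. f (2 * n)) sums ((s + s') / 2)" by (simp add: g_def)
  have "(\<lambda>n. h (2 * n + 1)) sums ((s - s') / 2)"
  proof (subst sums_mono_reindex)
    show "strict_mono (\<lambda>n::nat. 2 * n + 1)" by (simp add: strict_mono_def)
    show "h m = 0" if "m \<notin> range (\<lambda>n::nat. 2 * n + 1)" for m
    proof -
      have "even m" using that by (metis oddE rangeI)
      thus ?thesis by (simp add: h_def)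
    qed
    show "h sums ((s - s') / 2)" unfolding h_def by (intro sums_divide sums_diff s s')
  qed
  thus "(\<lambda>n. f (2 * n + 1)) sums ((s - s') / 2)" by (simp add: h_def)
qed

lemma power_minus_square: "(- x) ^ (k * k) = (-1) ^ k * (x::'a::comm_ring_1) ^ (k * k)"
  by (simp add: power_minus[of x] minus_one_power_iff)

lemma theta_pos_parts:
  fixes q :: complex
  assumes q: "norm q < 1"
  shows "(\<lambda>n. q ^ (2 * Suc n - 1)\<^sup>2) sums ((theta_pos q - theta_pos (-q)) / 2)"
    and "(\<lambda>n. q ^ (2 * Suc n)\<^sup>2) sums ((theta_pos q + theta_pos (-q)) / 2)"
    and "(\<lambda>n. (-1) ^ Suc n * q ^ (2 * (Suc n)\<^sup>2)) sums theta_pos (-(q\<^sup>2))"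
proof -
  have neg: "norm (-q) < 1" using q by simp
  have "(\<lambda>m. - ((-q) ^ (Suc m)\<^sup>2)) sums (- theta_pos (-q))"
    by (rule sums_minus[OF theta_pos_sums[OF neg]])
  moreover have "- ((-q) ^ (Suc m)\<^sup>2) = (-1) ^ m * q ^ (Suc m)\<^sup>2" for m
    unfolding power2_eq_square power_minus_square by simp
  ultimately have "(\<lambda>m. (-1) ^ m * q ^ (Suc m)\<^sup>2) sums (- theta_pos (-q))" by simp
  note parts = sums_even_odd_parts[OF theta_pos_sums[OF q] this]
  show "(\<lambda>n. q ^ (2 * Suc n - 1)\<^sup>2) sums ((theta_pos q - theta_pos (-q)) / 2)"
    using parts(1) by simp
  show "(\<lambda>n. q ^ (2 * Suc n)\<^sup>2) sums ((theta_pos q + theta_pos (-q)) / 2)"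
    using parts(2) by simp
  have "(-(q\<^sup>2)) ^ (Suc n)\<^sup>2 = (-1) ^ Suc n * q ^ (2 * (Suc n)\<^sup>2)" for n
    using power_minus_square[of "q\<^sup>2" "Suc n"] by (simp only: power2_eq_square[of "Suc n"] power_mult)
  with theta_pos_sums[of "-(q\<^sup>2)"] norm_power2_less_one[OF q]
  show "(\<lambda>n. (-1) ^ Suc n * q ^ (2 * (Suc n)\<^sup>2)) sums theta_pos (-(q\<^sup>2))"
    by simp
qed

lemma Sbar_i_theta:
  fixes q :: complex
  assumes q: "norm q < 1"
  shows "Sbar \<i> q = theta_pos q - theta_pos (-(q\<^sup>2))"
    and "Sbar1 \<i> q = (theta_pos q - theta_pos (-q)) / 2"
    and "Sbar2 \<i> q = (theta_pos q + theta_pos (-q)) / 2 - theta_pos (-(q\<^sup>2))"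
proof -
  note summand = Sbar_summand_i_sums[OF q]
  note parts = sums_even_odd_parts[OF summand(2,3)]
  have "(\<lambda>n. Sbar_summand \<i> q (Suc n)) sums ((1 + 2 * theta_pos q) / 2 - Sbar_summand \<i> q 0)"
    using summand(2) by (simp add: sums_Suc_iff)
  hence "Sbar \<i> q = (1 + 2 * theta_pos q) / 2 - (1 + 2 * theta_pos (-(q\<^sup>2))) / 2"
    unfolding Sbar_eq summand(1) by (rule sums_unique[symmetric])
  also have "\<dots> = theta_pos q - theta_pos (-(q\<^sup>2))"
    by (simp add: field_simps)
  finally show "Sbar \<i> q = theta_pos q - theta_pos (-(q\<^sup>2))" .
  have "Sbar1 \<i> q = ((1 + 2 * theta_pos q) / 2 - (1 + 2 * theta_pos (-q)) / 2) / 2"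
    unfolding Sbar1_eq using parts(2) by (rule sums_unique[symmetric])
  also have "\<dots> = (theta_pos q - theta_pos (-q)) / 2"
    by (simp add: field_simps)
  finally show "Sbar1 \<i> q = (theta_pos q - theta_pos (-q)) / 2" .
  have "(\<lambda>n. Sbar_summand \<i> q (2 * Suc n))
      sums (((1 + 2 * theta_pos q) / 2 + (1 + 2 * theta_pos (-q)) / 2) / 2 - Sbar_summand \<i> q 0)"
    using parts(1) sums_Suc_iff[of "\<lambda>n. Sbar_summand \<i> q (2 * n)"] by simp
  hence "Sbar2 \<i> q = ((1 + 2 * theta_pos q) / 2 + (1 + 2 * theta_pos (-q)) / 2) / 2
                      - (1 + 2 * theta_pos (-(q\<^sup>2))) / 2"
    unfolding Sbar2_eq summand(1) by (rule sums_unique[symmetric])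
  also have "\<dots> = (theta_pos q + theta_pos (-q)) / 2 - theta_pos (-(q\<^sup>2))"
    by (simp add: field_simps)
  finally show "Sbar2 \<i> q = (theta_pos q + theta_pos (-q)) / 2 - theta_pos (-(q\<^sup>2))" .
qed

theorem theorem2p15:
  fixes q :: complex
  assumes "norm q < 1"
  shows "Sbar \<i> q = (\<Sum>n. q ^ ((Suc n)\<^sup>2)) - (\<Sum>n. (-1) ^ Suc n * q ^ (2 * (Suc n)\<^sup>2))
    \<and> Sbar1 \<i> q = (\<Sum>n. q ^ ((2 * Suc n - 1)\<^sup>2))
    \<and> Sbar2 \<i> q = (\<Sum>n. q ^ ((2 * Suc n)\<^sup>2)) - (\<Sum>n. (-1) ^ Suc n * q ^ (2 * (Suc n)\<^sup>2))"
proof -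
  have "(\<Sum>n. q ^ (Suc n)\<^sup>2) = theta_pos q" by (simp add: theta_pos_def)
  with Sbar_i_theta[OF assms] theta_pos_parts[OF assms, THEN sums_unique]
  show ?thesis by argo
qed

end
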